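(* Let $T$ be the BFS tree produced by temporal BFS on a temporal graph $G=(V,E)$ from source $s$ with starting time $t_s$, and let $v\neq s$. If $v$ occurs in $T$, let $v_o$ be its occurrence of smallest level; then the sequence of tree edges on the path from the root to $v_o$ is a shortest temporal path from $s$ to $v$, i.e. a temporal path from $s$ to $v$ starting at or after $t_s$ whose number of hops is minimal among all temporal paths from $s$ to $v$ starting at or after $t_s$. If $v$ does not occur in $T$, then there is no temporal path from $s$ to $v$ starting at or after $t_s$.
   Context: A temporal graph is a pair $G=(V,E)$ where $V$ is a finite set of vertices and $E$ is a finite set of temporal edges, i.e. triples $(u,v,t)$ with $u,v\in V$, $u\neq v$, $t\in\mathbb{R}$ (the time at which the edge is active); distinct elements of $E$ are distinct triples. Fix $t_s\in\mathbb{R}$ and $s\in V$. A temporal path from $x$ to $y$ (starting at or after $t_s$) is a sequence $P=\langle (w_1,w_2,t_1),\dots,(w_k,w_{k+1},t_k)\rangle$ of $k\ge1$ edges of $E$ with $w_1=x$, $w_{k+1}=y$ and $t_s\le t_1\le t_2\le\dots\le t_k$; its number of hops is $k$. Temporal BFS. Records are tuples $(x,d,\tau,p)$ (vertex $x$, level $d$, time $\tau$, predecessor record $p$ or none); every record ever created is an occurrence (node) of the BFS tree $T$, rooted at the initial record, with a tree edge from the predecessor record to the record; the level and time of an occurrence are the final values of its fields. For each $x\in V$ a current value $\sigma(x)$ is kept, initially $\infty$, and set to $\tau$ whenever a record of $x$ is created or its time is updated to $\tau$. Initially the FIFO queue $Q$ contains only $(s,0,t_s,\text{none})$ and $\sigma(s)=t_s$;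 no edge is traversed. While $Q\neq\emptyset$: pop the front record $R=(u,d_u,\sigma_u,p_u)$; let $B$ be the set of edges $(u,v,t)\in E$ not yet traversed with $\sigma_u\le t$; for each vertex $v$ such that $B$ contains an edge to $v$ (in any order), let $e=(u,v,t)$ be the edge of $B$ to $v$ with smallest $t$, mark $e$ traversed, and: (i) if $Q$ contains no record of $v$ and $\sigma(v)>t$, create $(v,d_u+1,t,R)$ and append it to $Q$; (ii) if $Q$ contains a record of $v$ with level $d_u+1$ and $\sigma(v)>t$, set that record's time to $t$ and predecessor to $R$; (iii) if $Q$ contains a record of $v$ but none with level $d_u+1$, and $\sigma(v)>t$, create $(v,d_u+1,t,R)$ and append it to $Q$. When a record's predecessor is $R$, the tree edge into it corresponds to the last edge $e=(u,v,t)$ that created or updated it. *)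

theory Defs
  imports Complex_Main "HOL-Library.Extended_Real"
begin

type_synonym 'v tedge = "'v \<times> 'v \<times> real"

definition temporal_path :: "'v tedge set \<Rightarrow> real \<Rightarrow> 'v \<Rightarrow> 'v \<Rightarrow> 'v tedge list \<Rightarrow> bool" where
  "temporal_path E ts x y P \<longleftrightarrow>
     P \<noteq> [] \<and> set P \<subseteq> E \<and>
     fst (hd P) = x \<and> fst (snd (last P)) = y \<and>
     (\<forall>i. Suc i < length P \<longrightarrow> fst (snd (P ! i)) = fst (P ! Suc i)) \<and>
     ts \<le> snd (snd (hd P)) \<and>
     (\<forall>i. Suc i < length P \<longrightarrow> snd (snd (P ! i)) \<le> snd (snd (P ! Suc i)))"

definition shortest_temporal_path :: "'v tedge set \<Rightarrow> real \<Rightarrow> 'v \<Rightarrow> 'v \<Rightarrow> 'v tedge list \<Rightarrow> bool" where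
  "shortest_temporal_path E ts x y P \<longleftrightarrow>
     temporal_path E ts x y P \<and> (\<forall>Q. temporal_path E ts x y Q \<longrightarrow> length P \<le> length Q)"

text \<open>A record (occurrence of the BFS tree): vertex, level, time, predecessor record
  (index into the list of all records ever created) and the temporal edge that last
  created/updated it (the tree edge into it).\<close>
record 'v brec =
  rv :: 'v
  rlev :: nat
  rtime :: real
  rpred :: "nat option"
  redge :: "'v tedge option"

text \<open>State: all records ever created (record i is the i-th created), FIFO queue of record
  indices, the current values sigma, and the set of traversed edges.\<close>
record 'v bstate =
  recs :: "'v brec list"
  queue :: "nat list"
  sig :: "'v \<Rightarrow> ereal"
  trav :: "'v tedge set"

definition bfs_init :: "'v \<Rightarrow> real \<Rightarrow> 'v bstate" where
  "bfs_init s ts = \<lparr> recs = [\<lparr> rv = s, rlev = 0, rtime = ts, rpred = None, redge = None \<rparr>],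
                     queue = [0], sig = (\<lambda>_. \<infinity>)(s := ereal ts), trav = {} \<rparr>"

definition process_vertex :: "'v tedge set \<Rightarrow> nat \<Rightarrow> 'v bstate \<Rightarrow> 'v \<Rightarrow> 'v bstate" where
  "process_vertex B r st v = (let R = recs st ! r; u = rv R; d = rlev R;
      t = Min {t. (u, v, t) \<in> B}; e = (u, v, t);
      st1 = st\<lparr> trav := insert e (trav st) \<rparr>;
      inQ = [i \<leftarrow> queue st. rv (recs st ! i) = v];
      inQd = [i \<leftarrow> inQ. rlev (recs st ! i) = Suc d];
      create = st1\<lparr> recs := recs st @ [\<lparr> rv = v, rlev = Suc d, rtime = t, rpred = Some r, redge = Some e \<rparr>],
                    queue := queue st @ [length (recs st)],
                    sig := (sig st)(v := ereal t) \<rparr>;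
      update = st1\<lparr> recs := fold (\<lambda>i rs. rs[i := (rs ! i)\<lparr> rtime := t, rpred := Some r, redge := Some e \<rparr>])
                                 inQd (recs st),
                    sig := (sig st)(v := ereal t) \<rparr>
   in if inQ = [] \<and> sig st v > ereal t then create
      else if inQd \<noteq> [] \<and> sig st v > ereal t then update
      else if inQ \<noteq> [] \<and> inQd = [] \<and> sig st v > ereal t then create
      else st1)"

inductive bfs_step :: "'v tedge set \<Rightarrow> 'v bstate \<Rightarrow> 'v bstate \<Rightarrow> bool" for E where
  "\<lbrakk> queue st = r # rest;
     B = {e \<in> E. e \<notin> trav st \<and> fst e = rv (recs st ! r) \<and> rtime (recs st ! r) \<le> snd (snd e)};
     distinct vs; set vs = {v. \<exists>t. (rv (recs st ! r), v, t) \<in> B} \<rbrakk>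
   \<Longrightarrow> bfs_step E st (fold (\<lambda>v st'. process_vertex B r st' v) vs (st\<lparr> queue := rest \<rparr>))"

definition bfs_final :: "'v tedge set \<Rightarrow> 'v \<Rightarrow> real \<Rightarrow> 'v bstate \<Rightarrow> bool" where
  "bfs_final E s ts st \<longleftrightarrow> (bfs_step E)\<^sup>*\<^sup>* (bfs_init s ts) st \<and> queue st = []"

inductive tree_path :: "'v bstate \<Rightarrow> nat \<Rightarrow> 'v tedge list \<Rightarrow> bool" for st where
  root: "tree_path st 0 []"
| step: "\<lbrakk> i < length (recs st); rpred (recs st ! i) = Some j; redge (recs st ! i) = Some e;
           tree_path st j P \<rbrakk> \<Longrightarrow> tree_path st i (P @ [e])"

definition occurs :: "'v bstate \<Rightarrow> 'v \<Rightarrow> bool" where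
  "occurs st v \<longleftrightarrow> (\<exists>i < length (recs st). rv (recs st ! i) = v)"

definition min_level_occ :: "'v bstate \<Rightarrow> 'v \<Rightarrow> nat \<Rightarrow> bool" where
  "min_level_occ st v i \<longleftrightarrow> i < length (recs st) \<and> rv (recs st ! i) = v \<and>
     (\<forall>j < length (recs st). rv (recs st ! j) = v \<longrightarrow> rlev (recs st ! i) \<le> rlev (recs st ! j))"

end

theory Submission
  imports Defs
begin

text \<open>Through its chain of predecessors every record carries a temporal path from s whose number
  of hops is its level and whose last edge departs at its time. Once a record has been dequeued it
  is expanded: every edge leaving its vertex no earlier than its time leads to a vertex owning a
  record at most one level deeper and no later. Later relaxations only lower the times of queued
  records and never touch dequeued ones, so expansion persists. When the queue is empty every record
  is expanded, and induction along any temporal path P from s to v yields a record of v of level at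
  most the length of P. Hence the tree path to a minimum-level occurrence of v is shortest, and v
  occurs as soon as it is temporally reachable.\<close>

lemma successively_iff_nth:
  "successively R xs \<longleftrightarrow> (\<forall>i. Suc i < length xs \<longrightarrow> R (xs ! i) (xs ! Suc i))"
proof (induction R xs rule: successively.induct)
  case (3 R x y xs)
  then show ?case by (auto simp: less_Suc_eq_0_disj all_conj_distrib[symmetric])
qed auto

lemma length_fold_update_nth: "length (fold (\<lambda>i xs. xs[i := f (xs ! i)]) is xs) = length xs"
  by (induction "is" arbitrary: xs) auto

lemma nth_fold_update_nth_idem:
  assumes "\<And>x. f (f x) = f x" "k < length xs"
  shows "fold (\<lambda>i xs. xs[i := f (xs ! i)]) is xs ! k = (if k \<in> set is then f (xs ! k) else xs ! k)"
  using assms(2)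
proof (induction "is" arbitrary: xs)
  case (Cons a "is")
  have "k < length (xs[a := f (xs ! a)])" using Cons.prems by simp
  from Cons.IH[OF this] show ?case using Cons.prems by (cases "a = k") (auto simp: assms(1))
qed simp

definition edge_continues :: "'v tedge \<Rightarrow> 'v tedge \<Rightarrow> bool" where
  "edge_continues e f \<longleftrightarrow> fst (snd e) = fst f \<and> snd (snd e) \<le> snd (snd f)"

lemma temporal_path_iff_successively:
  "temporal_path E ts x y P \<longleftrightarrow>
     P \<noteq> [] \<and> set P \<subseteq> E \<and> fst (hd P) = x \<and> fst (snd (last P)) = y \<and>
     ts \<le> snd (snd (hd P)) \<and> successively edge_continues P"
  unfolding temporal_path_def successively_iff_nth edge_continues_def by blast

lemma temporal_path_single:
  "(x, y, t) \<in> E \<Longrightarrow> ts \<le> t \<Longrightarrow> temporal_path E ts x y [(x, y, t)]"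
  by (simp add: temporal_path_iff_successively)

lemma temporal_path_snoc:
  assumes "P \<noteq> []"
  shows "temporal_path E ts x z (P @ [e]) \<longleftrightarrow>
    temporal_path E ts x (fst e) P \<and> e \<in> E \<and> fst (snd e) = z \<and> snd (snd (last P)) \<le> snd (snd e)"
  using assms
  by (auto simp: temporal_path_iff_successively successively_append_iff edge_continues_def)

section \<open>Invariants of the search\<close>

definition reached :: "'v bstate \<Rightarrow> 'v \<Rightarrow> nat \<Rightarrow> real \<Rightarrow> bool" where
  "reached st x L t \<longleftrightarrow>
     (\<exists>b < length (recs st). rv (recs st ! b) = x \<and> rlev (recs st ! b) \<le> L \<and> rtime (recs st ! b) \<le> t)"

definition refines :: "'v bstate \<Rightarrow> 'v bstate \<Rightarrow> bool" where
  "refines st st' \<longleftrightarrow> length (recs st) \<le> length (recs st') \<and>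
     (\<forall>i < length (recs st). rv (recs st' ! i) = rv (recs st ! i) \<and> rlev (recs st' ! i) = rlev (recs st ! i)
        \<and> rtime (recs st' ! i) \<le> rtime (recs st ! i)
        \<and> (i \<notin> set (queue st) \<longrightarrow> recs st' ! i = recs st ! i))"

definition expanded :: "'v tedge set \<Rightarrow> 'v bstate \<Rightarrow> nat \<Rightarrow> bool" where
  "expanded E st a \<longleftrightarrow> (\<forall>x t. (rv (recs st ! a), x, t) \<in> E \<and> rtime (recs st ! a) \<le> t
     \<longrightarrow> reached st x (Suc (rlev (recs st ! a))) t)"

lemma reached_refines: "reached st x L t \<Longrightarrow> refines st st' \<Longrightarrow> reached st' x L t"
  unfolding reached_def refines_def by (metis (no_types, lifting) dual_order.trans order_less_le_trans)

lemma reached_mono: "reached st x L t \<Longrightarrow> L \<le> L' \<Longrightarrow> t \<le> t' \<Longrightarrow> reached st x L' t'"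
  unfolding reached_def using order_trans by fastforce

lemma expanded_refines:
  assumes "expanded E st a" "refines st st'" "a < length (recs st)" "a \<notin> set (queue st)"
  shows "expanded E st' a"
  unfolding expanded_def
proof (intro allI impI)
  fix x t
  have a: "recs st' ! a = recs st ! a" using assms(2-4) by (simp add: refines_def)
  assume "(rv (recs st' ! a), x, t) \<in> E \<and> rtime (recs st' ! a) \<le> t"
  then have "reached st x (Suc (rlev (recs st' ! a))) t" using assms(1) unfolding a expanded_def by blast
  then show "reached st' x (Suc (rlev (recs st' ! a))) t" using assms(2) by (rule reached_refines)
qed

definition tree_consistent :: "'v tedge set \<Rightarrow> 'v bstate \<Rightarrow> bool" where
  "tree_consistent E st \<longleftrightarrow> (\<forall>i. 0 < i \<and> i < length (recs st) \<longrightarrow>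
     (\<exists>j < length (recs st). rpred (recs st ! i) = Some j \<and> j \<notin> set (queue st)
        \<and> redge (recs st ! i) = Some (rv (recs st ! j), rv (recs st ! i), rtime (recs st ! i))
        \<and> (rv (recs st ! j), rv (recs st ! i), rtime (recs st ! i)) \<in> E
        \<and> rtime (recs st ! j) \<le> rtime (recs st ! i) \<and> rlev (recs st ! i) = Suc (rlev (recs st ! j))))"

definition sig_min_time :: "'v bstate \<Rightarrow> bool" where
  "sig_min_time st \<longleftrightarrow>
     (\<forall>b < length (recs st). sig st (rv (recs st ! b)) \<le> ereal (rtime (recs st ! b))) \<and>
     (\<forall>x. sig st x \<noteq> \<infinity> \<longrightarrow>
        (\<exists>b < length (recs st). rv (recs st ! b) = x \<and> ereal (rtime (recs st ! b)) \<le> sig st x))"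

definition traversed_from_dequeued :: "'v bstate \<Rightarrow> bool" where
  "traversed_from_dequeued st \<longleftrightarrow> (\<forall>e \<in> trav st. \<exists>a < length (recs st).
     a \<notin> set (queue st) \<and> rv (recs st ! a) = fst e \<and> rtime (recs st ! a) \<le> snd (snd e))"

definition state_inv :: "'v tedge set \<Rightarrow> 'v \<Rightarrow> real \<Rightarrow> 'v bstate \<Rightarrow> bool" where
  "state_inv E s ts st \<longleftrightarrow>
     recs st \<noteq> [] \<and> rv (recs st ! 0) = s \<and> rlev (recs st ! 0) = 0 \<and> rtime (recs st ! 0) = ts \<and>
     distinct (queue st) \<and> (\<forall>q \<in> set (queue st). q < length (recs st)) \<and>
     tree_consistent E st \<and> sig_min_time st \<and> traversed_from_dequeued st"

lemma less_rtime_if_less_sig: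
  "sig_min_time st \<Longrightarrow> b < length (recs st) \<Longrightarrow> rv (recs st ! b) = x \<Longrightarrow> ereal t < sig st x
   \<Longrightarrow> t < rtime (recs st ! b)"
proof -
  assume "sig_min_time st" "b < length (recs st)" "rv (recs st ! b) = x" and lt: "ereal t < sig st x"
  then have "sig st x \<le> ereal (rtime (recs st ! b))" unfolding sig_min_time_def by blast
  with lt have "ereal t < ereal (rtime (recs st ! b))" by (rule order_less_le_trans)
  then show ?thesis by simp
qed

definition levels_layered :: "'v bstate \<Rightarrow> nat \<Rightarrow> bool" where
  "levels_layered st d \<longleftrightarrow>
     (\<forall>b < length (recs st). rlev (recs st ! b) \<le> Suc d) \<and>
     sorted (map (\<lambda>i. rlev (recs st ! i)) (queue st)) \<and>
     (\<forall>q \<in> set (queue st). d \<le> rlev (recs st ! q)) \<and>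
     (\<forall>a < length (recs st). a \<notin> set (queue st) \<longrightarrow> rlev (recs st ! a) \<le> d)"

lemma levels_layered_append:
  assumes lay: "levels_layered st d" and ref: "refines st st'"
    and valid: "\<forall>q \<in> set (queue st). q < length (recs st)"
    and queue': "queue st' = queue st @ [length (recs st)..<length (recs st')]"
    and new: "\<forall>b. length (recs st) \<le> b \<and> b < length (recs st') \<longrightarrow> rlev (recs st' ! b) = Suc d"
  shows "levels_layered st' d"
proof -
  let ?n = "length (recs st)" and ?lev = "\<lambda>st i. rlev (recs st ! i)"
  have old: "\<And>i. i < ?n \<Longrightarrow> ?lev st' i = ?lev st i" using ref by (simp add: refines_def)
  have bound: "\<forall>b < ?n. ?lev st b \<le> Suc d" and srt: "sorted (map (?lev st) (queue st))"
    and queued: "\<forall>q \<in> set (queue st). d \<le> ?lev st q"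
    and dequeued: "\<forall>a < ?n. a \<notin> set (queue st) \<longrightarrow> ?lev st a \<le> d"
    using lay by (simp_all add: levels_layered_def)
  have eq_old: "map (?lev st') (queue st) = map (?lev st) (queue st)" using old valid by simp
  have eq_new: "map (?lev st') [?n..<length (recs st')] = replicate (length (recs st') - ?n) (Suc d)"
    using new by (intro nth_equalityI) auto
  have "sorted (map (?lev st') (queue st'))"
    unfolding queue' map_append eq_old eq_new using srt bound valid by (auto simp: sorted_append)
  moreover have "\<forall>b < length (recs st'). ?lev st' b \<le> Suc d"
    using bound old new by (metis not_le order_refl)
  moreover have "\<forall>q \<in> set (queue st'). d \<le> ?lev st' q"
    using queued old valid new by (auto simp: queue')
  moreover have "\<forall>a < length (recs st'). a \<notin> set (queue st') \<longrightarrow> ?lev st' a \<le> d"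
    using dequeued old by (auto simp: queue' not_le)
  ultimately show ?thesis by (simp add: levels_layered_def)
qed

section \<open>Processing the edges out of a dequeued record\<close>

text \<open>While the edges B out of the dequeued record r are handled, W collects the targets already
  processed.\<close>

definition expanding_inv ::
    "'v tedge set \<Rightarrow> 'v \<Rightarrow> real \<Rightarrow> nat \<Rightarrow> 'v tedge set \<Rightarrow> 'v set \<Rightarrow> 'v bstate \<Rightarrow> bool" where
  "expanding_inv E s ts r B W st \<longleftrightarrow> state_inv E s ts st \<and>
     r < length (recs st) \<and> r \<notin> set (queue st) \<and> levels_layered st (rlev (recs st ! r)) \<and>
     (\<forall>a < length (recs st). a \<notin> set (queue st) \<and> a \<noteq> r \<longrightarrow> expanded E st a) \<and>
     (\<forall>x t. (rv (recs st ! r), x, t) \<in> E \<and> rtime (recs st ! r) \<le> t \<and>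
        ((rv (recs st ! r), x, t) \<notin> B \<or> x \<in> W) \<longrightarrow> reached st x (Suc (rlev (recs st ! r))) t) \<and>
     finite B \<and> B \<subseteq> E \<and> (\<forall>e \<in> B. fst e = rv (recs st ! r) \<and> rtime (recs st ! r) \<le> snd (snd e))"

lemma expanding_inv_extend:
  assumes inv: "expanding_inv E s ts r B W st"
    and ref: "refines st st'" and inv': "state_inv E s ts st'"
    and queue': "queue st' = queue st @ [length (recs st)..<length (recs st')]"
    and new: "\<forall>b. length (recs st) \<le> b \<and> b < length (recs st') \<longrightarrow>
                rlev (recs st' ! b) = Suc (rlev (recs st ! r))"
    and x: "reached st' x (Suc (rlev (recs st ! r))) tm"
    and first: "\<forall>t. (rv (recs st ! r), x, t) \<in> B \<longrightarrow> tm \<le> t"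
  shows "expanding_inv E s ts r B (insert x W) st'"
proof -
  let ?n = "length (recs st)"
  have r: "r < ?n" "r \<notin> set (queue st)" and valid: "\<forall>q \<in> set (queue st). q < ?n"
    using inv by (simp_all add: expanding_inv_def state_inv_def)
  have rr: "recs st' ! r = recs st ! r" using ref r by (simp add: refines_def)
  have dequeued: "a < ?n \<and> a \<notin> set (queue st)" if "a < length (recs st')" "a \<notin> set (queue st')" for a
    using that by (auto simp: queue' not_le)
  have "levels_layered st' (rlev (recs st ! r))"
    using levels_layered_append[OF _ ref valid queue' new] inv by (simp add: expanding_inv_def)
  moreover have "expanded E st' a" if "a < length (recs st')" "a \<notin> set (queue st')" "a \<noteq> r" for a
    using inv dequeued[OF that(1,2)] that(3) expanded_refines[OF _ ref]
    by (simp add: expanding_inv_def)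
  moreover have "reached st' y (Suc (rlev (recs st ! r))) t"
    if "(rv (recs st ! r), y, t) \<in> E" "rtime (recs st ! r) \<le> t"
       "(rv (recs st ! r), y, t) \<notin> B \<or> y \<in> insert x W" for y t
  proof (cases "(rv (recs st ! r), y, t) \<notin> B \<or> y \<in> W")
    case True
    then show ?thesis using inv that reached_refines[OF _ ref] by (simp add: expanding_inv_def)
  next
    case False
    then show ?thesis using that first reached_mono[OF x] by auto
  qed
  moreover have "r < length (recs st')" "r \<notin> set (queue st')" using r ref by (auto simp: refines_def queue')
  ultimately show ?thesis using inv inv' unfolding expanding_inv_def rr by blast
qed

definition relaxed_record :: "nat \<Rightarrow> nat \<Rightarrow> 'v tedge \<Rightarrow> 'v brec" where
  "relaxed_record r d e = \<lparr>rv = fst (snd e), rlev = d, rtime = snd (snd e), rpred = Some r, redge = Some e\<rparr>"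

text \<open>Whether process_vertex appends a record or updates the queued records of the target at the
  next level, it installs the same record at every index of K.\<close>

definition relaxation :: "'v bstate \<Rightarrow> nat \<Rightarrow> 'v tedge \<Rightarrow> nat set \<Rightarrow> 'v bstate \<Rightarrow> bool" where
  "relaxation st r e K st' \<longleftrightarrow>
     K \<noteq> {} \<and> length (recs st) \<le> length (recs st') \<and> K \<subseteq> {..<length (recs st')} \<and>
     {length (recs st)..<length (recs st')} \<subseteq> K \<and>
     (\<forall>i \<in> K. i < length (recs st) \<longrightarrow> i \<in> set (queue st) \<and>
        rv (recs st ! i) = fst (snd e) \<and> rlev (recs st ! i) = Suc (rlev (recs st ! r))) \<and>
     (\<forall>i < length (recs st'). recs st' ! i =
        (if i \<in> K then relaxed_record r (Suc (rlev (recs st ! r))) e else recs st ! i)) \<and>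
     queue st' = queue st @ [length (recs st)..<length (recs st')] \<and>
     sig st' = (sig st)(fst (snd e) := ereal (snd (snd e))) \<and> trav st' = insert e (trav st)"

lemma relaxation_unchanged:
  assumes "relaxation st r e K st'" "i < length (recs st')" "i \<notin> K"
  shows "i < length (recs st)" "recs st' ! i = recs st ! i"
proof -
  show "i < length (recs st)"
    using assms unfolding relaxation_def by (metis atLeastLessThan_iff not_le subsetD)
  then show "recs st' ! i = recs st ! i" using assms by (simp add: relaxation_def)
qed

lemma relaxation_keeps_dequeued:
  assumes "relaxation st r e K st'" "i < length (recs st)" "i \<notin> set (queue st)"
  shows "i \<notin> K" "recs st' ! i = recs st ! i" "i < length (recs st')" "i \<notin> set (queue st')"
  using assms by (auto simp: relaxation_def)

lemma relaxation_refines: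
  assumes rel: "relaxation st r (u, x, tm) K st'"
    and sig: "sig_min_time st" and lt: "ereal tm < sig st x"
  shows "refines st st'"
proof -
  have "rv (recs st' ! i) = rv (recs st ! i) \<and> rlev (recs st' ! i) = rlev (recs st ! i) \<and>
        rtime (recs st' ! i) \<le> rtime (recs st ! i) \<and> (i \<notin> set (queue st) \<longrightarrow> recs st' ! i = recs st ! i)"
    if i: "i < length (recs st)" for i
  proof (cases "i \<in> K")
    case True
    then have "tm < rtime (recs st ! i)"
      using rel i less_rtime_if_less_sig[OF sig i _ lt] by (simp add: relaxation_def)
    then show ?thesis using True rel i by (auto simp: relaxation_def relaxed_record_def)
  next
    case False
    then show ?thesis using rel i by (auto simp: relaxation_def)
  qed
  then show ?thesis using rel by (simp add: refines_def relaxation_def)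
qed

lemma tree_consistent_relaxation:
  assumes rel: "relaxation st r (u, x, tm) K st'" and tree: "tree_consistent E st"
    and r: "r < length (recs st)" "r \<notin> set (queue st)" "rv (recs st ! r) = u"
    and e: "(u, x, tm) \<in> E" "rtime (recs st ! r) \<le> tm"
  shows "tree_consistent E st'"
  unfolding tree_consistent_def
proof (intro allI impI)
  fix i assume i: "0 < i \<and> i < length (recs st')"
  note r' = relaxation_keeps_dequeued[OF rel r(1,2)]
  show "\<exists>j < length (recs st'). rpred (recs st' ! i) = Some j \<and> j \<notin> set (queue st')
        \<and> redge (recs st' ! i) = Some (rv (recs st' ! j), rv (recs st' ! i), rtime (recs st' ! i))
        \<and> (rv (recs st' ! j), rv (recs st' ! i), rtime (recs st' ! i)) \<in> E
        \<and> rtime (recs st' ! j) \<le> rtime (recs st' ! i) \<and> rlev (recs st' ! i) = Suc (rlev (recs st' ! j))"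
  proof (cases "i \<in> K")
    case True
    then have "recs st' ! i = relaxed_record r (Suc (rlev (recs st ! r))) (u, x, tm)"
      using rel i by (simp add: relaxation_def)
    then show ?thesis using r r' e by (intro exI[of _ r]) (simp add: relaxed_record_def)
  next
    case False
    then have i_old: "i < length (recs st)" "recs st' ! i = recs st ! i"
      using relaxation_unchanged[OF rel] i by auto
    then obtain j where j: "j < length (recs st)" "j \<notin> set (queue st)" "rpred (recs st ! i) = Some j"
        "redge (recs st ! i) = Some (rv (recs st ! j), rv (recs st ! i), rtime (recs st ! i))"
        "(rv (recs st ! j), rv (recs st ! i), rtime (recs st ! i)) \<in> E"
        "rtime (recs st ! j) \<le> rtime (recs st ! i)" "rlev (recs st ! i) = Suc (rlev (recs st ! j))"
      using tree i unfolding tree_consistent_def by blast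
    show ?thesis
      using j i_old relaxation_keeps_dequeued[OF rel j(1,2)] by (intro exI[of _ j]) simp
  qed
qed

lemma sig_min_time_relaxation:
  assumes rel: "relaxation st r (u, x, tm) K st'"
    and sig: "sig_min_time st" and lt: "ereal tm < sig st x"
  shows "sig_min_time st'"
proof -
  let ?R = "relaxed_record r (Suc (rlev (recs st ! r))) (u, x, tm)"
  have recs': "\<And>i. i < length (recs st') \<Longrightarrow> recs st' ! i = (if i \<in> K then ?R else recs st ! i)"
    and K: "K \<noteq> {}" "K \<subseteq> {..<length (recs st')}" "{length (recs st)..<length (recs st')} \<subseteq> K"
    and K_x: "\<And>i. i \<in> K \<Longrightarrow> i < length (recs st) \<Longrightarrow> rv (recs st ! i) = x"
    and sig': "sig st' = (sig st)(x := ereal tm)"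
    using rel by (auto simp: relaxation_def)
  have lower: "sig st' (rv (recs st' ! b)) \<le> ereal (rtime (recs st' ! b))" if b: "b < length (recs st')" for b
  proof (cases "b \<in> K")
    case True then show ?thesis using recs' b sig' by (simp add: relaxed_record_def)
  next
    case False
    then have "b < length (recs st)" "recs st' ! b = recs st ! b" using relaxation_unchanged[OF rel b] by auto
    then show ?thesis using sig sig' less_rtime_if_less_sig[OF sig _ _ lt]
      by (cases "rv (recs st ! b) = x") (auto simp: sig_min_time_def less_imp_le)
  qed
  have attained: "\<exists>b < length (recs st'). rv (recs st' ! b) = y \<and> ereal (rtime (recs st' ! b)) \<le> sig st' y"
    if fin: "sig st' y \<noteq> \<infinity>" for y
  proof (cases "y = x")
    case True
    obtain k where "k \<in> K" using K(1) by blast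
    then show ?thesis using True K(2) recs' sig' by (intro exI[of _ k]) (auto simp: relaxed_record_def)
  next
    case False
    then obtain b where "b < length (recs st)" "rv (recs st ! b) = y" "ereal (rtime (recs st ! b)) \<le> sig st y"
      using sig fin sig' unfolding sig_min_time_def by auto
    then show ?thesis using False K(3) K_x recs' sig' rel
      by (intro exI[of _ b]) (auto simp: relaxation_def)
  qed
  show ?thesis unfolding sig_min_time_def using lower attained by blast
qed

lemma traversed_from_dequeued_relaxation:
  assumes rel: "relaxation st r (u, x, tm) K st'" and trav: "traversed_from_dequeued st"
    and r: "r < length (recs st)" "r \<notin> set (queue st)" "rv (recs st ! r) = u" "rtime (recs st ! r) \<le> tm"
  shows "traversed_from_dequeued st'"
  unfolding traversed_from_dequeued_def
proof
  fix e assume "e \<in> trav st'"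
  then have "e = (u, x, tm) \<or> e \<in> trav st" using rel by (simp add: relaxation_def)
  then show "\<exists>a < length (recs st'). a \<notin> set (queue st') \<and> rv (recs st' ! a) = fst e \<and>
    rtime (recs st' ! a) \<le> snd (snd e)"
  proof
    assume "e = (u, x, tm)"
    then show ?thesis using r relaxation_keeps_dequeued[OF rel r(1,2)] by (intro exI[of _ r]) simp
  next
    assume "e \<in> trav st"
    then obtain a where "a < length (recs st)" "a \<notin> set (queue st)" "rv (recs st ! a) = fst e"
        "rtime (recs st ! a) \<le> snd (snd e)"
      using trav unfolding traversed_from_dequeued_def by blast
    then show ?thesis using relaxation_keeps_dequeued[OF rel] by (intro exI[of _ a]) simp
  qed
qed

lemma state_inv_relaxation:
  assumes rel: "relaxation st r (u, x, tm) K st'" and inv: "state_inv E s ts st"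
    and r: "r < length (recs st)" "r \<notin> set (queue st)" "rv (recs st ! r) = u"
    and e: "(u, x, tm) \<in> E" "rtime (recs st ! r) \<le> tm" and lt: "ereal tm < sig st x"
  shows "state_inv E s ts st'"
proof -
  have root: "recs st \<noteq> []" "rlev (recs st ! 0) = 0" and valid: "\<forall>q \<in> set (queue st). q < length (recs st)"
    using inv by (simp_all add: state_inv_def)
  then have "0 \<notin> K" using rel by (auto simp: relaxation_def)
  moreover have "0 < length (recs st')" using rel root by (auto simp: relaxation_def)
  ultimately have "recs st' ! 0 = recs st ! 0" "recs st' \<noteq> []"
    using relaxation_unchanged[OF rel] by auto
  moreover have "distinct (queue st')" "\<forall>q \<in> set (queue st'). q < length (recs st')"
    using rel inv valid by (auto simp: relaxation_def state_inv_def)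
  moreover have "tree_consistent E st'"
    using tree_consistent_relaxation[OF rel _ r e] inv by (simp add: state_inv_def)
  moreover have "sig_min_time st'"
    using sig_min_time_relaxation[OF rel _ lt] inv by (simp add: state_inv_def)
  moreover have "traversed_from_dequeued st'"
    using traversed_from_dequeued_relaxation[OF rel _ r e(2)] inv by (simp add: state_inv_def)
  ultimately show ?thesis using inv by (simp add: state_inv_def)
qed

lemma expanding_inv_relaxation:
  assumes inv: "expanding_inv E s ts r B W st"
    and rel: "relaxation st r (rv (recs st ! r), x, tm) K st'"
    and e: "(rv (recs st ! r), x, tm) \<in> B" and first: "\<forall>t. (rv (recs st ! r), x, t) \<in> B \<longrightarrow> tm \<le> t"
    and lt: "ereal tm < sig st x"
  shows "expanding_inv E s ts r B (insert x W) st'"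
proof (rule expanding_inv_extend[OF inv _ _ _ _ _ first])
  have st: "state_inv E s ts st" and r: "r < length (recs st)" "r \<notin> set (queue st)"
    and eE: "(rv (recs st ! r), x, tm) \<in> E" "rtime (recs st ! r) \<le> tm"
    using inv e by (auto simp: expanding_inv_def)
  show "refines st st'"
    using relaxation_refines[OF rel _ lt] st by (simp add: state_inv_def)
  show "state_inv E s ts st'" by (rule state_inv_relaxation[OF rel st r refl eE lt])
  show "queue st' = queue st @ [length (recs st)..<length (recs st')]"
    using rel by (simp add: relaxation_def)
  show "\<forall>b. length (recs st) \<le> b \<and> b < length (recs st') \<longrightarrow> rlev (recs st' ! b) = Suc (rlev (recs st ! r))"
    using rel by (auto simp: relaxation_def relaxed_record_def)
  obtain k where "k \<in> K" using rel by (auto simp: relaxation_def)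
  then show "reached st' x (Suc (rlev (recs st ! r))) tm"
    using rel unfolding reached_def relaxation_def
    by (intro exI[of _ k]) (auto simp: relaxed_record_def)
qed

lemma update_eq_relaxed_record:
  "rv R = fst (snd e) \<Longrightarrow> rlev R = d \<Longrightarrow>
   R\<lparr>rtime := snd (snd e), rpred := Some r, redge := Some e\<rparr> = relaxed_record r d e"
  by (cases R) (simp add: relaxed_record_def)

lemma process_vertex_relaxation:
  assumes valid: "\<forall>q \<in> set (queue st). q < length (recs st)"
    and tm: "tm = Min {t. (rv (recs st ! r), x, t) \<in> B}" and lt: "ereal tm < sig st x"
  shows "\<exists>K. relaxation st r (rv (recs st ! r), x, tm) K (process_vertex B r st x)"
proof -
  let ?n = "length (recs st)" and ?d = "Suc (rlev (recs st ! r))" and ?e = "(rv (recs st ! r), x, tm)"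
  let ?Q = "[i \<leftarrow> [i \<leftarrow> queue st. rv (recs st ! i) = x]. rlev (recs st ! i) = ?d]"
  show ?thesis
  proof (cases "?Q = []")
    case True
    then have "process_vertex B r st x = st\<lparr>trav := insert ?e (trav st),
        recs := recs st @ [relaxed_record r ?d ?e], queue := queue st @ [?n], sig := (sig st)(x := ereal tm)\<rparr>"
      using lt unfolding process_vertex_def Let_def tm[symmetric] by (simp add: relaxed_record_def)
    then show ?thesis by (intro exI[of _ "{?n}"]) (auto simp: relaxation_def nth_append)
  next
    case False
    define Q where "Q = ?Q"
    let ?f = "\<lambda>R. R\<lparr>rtime := tm, rpred := Some r, redge := Some ?e\<rparr>"
    let ?recs = "fold (\<lambda>i rs. rs[i := ?f (rs ! i)]) Q (recs st)"
    have "[i \<leftarrow> queue st. rv (recs st ! i) = x] \<noteq> []" using False by (auto simp: filter_empty_conv)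
    then have pv: "process_vertex B r st x =
        st\<lparr>trav := insert ?e (trav st), recs := ?recs, sig := (sig st)(x := ereal tm)\<rparr>"
      using lt False unfolding process_vertex_def Let_def tm[symmetric] Q_def by simp
    have Q: "set Q = {i \<in> set (queue st). rv (recs st ! i) = x \<and> rlev (recs st ! i) = ?d}" "set Q \<noteq> {}"
      using False by (auto simp: Q_def filter_empty_conv)
    have "?recs ! i = (if i \<in> set Q then relaxed_record r ?d ?e else recs st ! i)" if "i < ?n" for i
      using nth_fold_update_nth_idem[of ?f, OF _ that] update_eq_relaxed_record[of _ ?e ?d r] Q(1) by simp
    moreover have "length ?recs = ?n" by (rule length_fold_update_nth)
    ultimately show ?thesis
      using Q valid unfolding pv by (intro exI[of _ "set Q"]) (auto simp: relaxation_def)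
  qed
qed

lemma expanding_inv_skip:
  assumes inv: "expanding_inv E s ts r B W st"
    and e: "(rv (recs st ! r), x, tm) \<in> B" and first: "\<forall>t. (rv (recs st ! r), x, t) \<in> B \<longrightarrow> tm \<le> t"
    and ge: "\<not> ereal tm < sig st x"
  shows "expanding_inv E s ts r B (insert x W) (st\<lparr>trav := insert (rv (recs st ! r), x, tm) (trav st)\<rparr>)"
proof (rule expanding_inv_extend[OF inv _ _ _ _ _ first])
  let ?st' = "st\<lparr>trav := insert (rv (recs st ! r), x, tm) (trav st)\<rparr>"
  have st: "state_inv E s ts st" and r: "r < length (recs st)" "r \<notin> set (queue st)"
    and lev: "\<forall>b < length (recs st). rlev (recs st ! b) \<le> Suc (rlev (recs st ! r))"
    and tm: "rtime (recs st ! r) \<le> tm"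
    using inv e by (auto simp: expanding_inv_def levels_layered_def)
  show "refines st ?st'" by (simp add: refines_def)
  show "state_inv E s ts ?st'"
    using st r tm unfolding state_inv_def tree_consistent_def sig_min_time_def traversed_from_dequeued_def
    by auto
  show "queue ?st' = queue st @ [length (recs st)..<length (recs ?st')]" by simp
  show "\<forall>b. length (recs st) \<le> b \<and> b < length (recs ?st') \<longrightarrow> rlev (recs ?st' ! b) = Suc (rlev (recs st ! r))"
    by simp
  have "sig st x \<noteq> \<infinity>" using ge by auto
  then obtain b where b: "b < length (recs st)" "rv (recs st ! b) = x"
      "ereal (rtime (recs st ! b)) \<le> sig st x"
    using st by (auto simp: state_inv_def sig_min_time_def)
  have "sig st x \<le> ereal tm" using ge by (simp add: not_less)
  with b(3) have "ereal (rtime (recs st ! b)) \<le> ereal tm" by (rule order_trans)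
  then show "reached ?st' x (Suc (rlev (recs st ! r))) tm"
    using b lev unfolding reached_def by (intro exI[of _ b]) auto
qed

lemma expanding_inv_process_vertex:
  assumes inv: "expanding_inv E s ts r B W st" and x: "\<exists>e \<in> B. fst (snd e) = x"
  shows "expanding_inv E s ts r B (insert x W) (process_vertex B r st x)"
proof -
  let ?u = "rv (recs st ! r)"
  define tm where "tm = Min {t. (?u, x, t) \<in> B}"
  have B: "finite B" "\<forall>e \<in> B. fst e = ?u" and valid: "\<forall>q \<in> set (queue st). q < length (recs st)"
    using inv by (auto simp: expanding_inv_def state_inv_def)
  have fin: "finite {t. (?u, x, t) \<in> B}"
    by (rule finite_subset[of _ "(\<lambda>e. snd (snd e)) ` B"]) (use B(1) in force)+
  have "{t. (?u, x, t) \<in> B} \<noteq> {}" using x B(2) by force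
  then have e: "(?u, x, tm) \<in> B" and first: "\<forall>t. (?u, x, t) \<in> B \<longrightarrow> tm \<le> t"
    using Min_in[OF fin] Min_le[OF fin] unfolding tm_def by auto
  show ?thesis
  proof (cases "ereal tm < sig st x")
    case True
    then obtain K where "relaxation st r (?u, x, tm) K (process_vertex B r st x)"
      using process_vertex_relaxation[OF valid tm_def] by blast
    then show ?thesis using expanding_inv_relaxation[OF inv _ e first True] by blast
  next
    case False
    then have "process_vertex B r st x = st\<lparr>trav := insert (?u, x, tm) (trav st)\<rparr>"
      unfolding process_vertex_def Let_def tm_def[symmetric] by simp
    then show ?thesis using expanding_inv_skip[OF inv e first False] by simp
  qed
qed

lemma expanding_inv_fold:
  assumes "expanding_inv E s ts r B W st" "\<forall>x \<in> set vs. \<exists>e \<in> B. fst (snd e) = x"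
  shows "expanding_inv E s ts r B (W \<union> set vs) (fold (\<lambda>v st. process_vertex B r st v) vs st)"
  using assms
proof (induction vs arbitrary: W st)
  case (Cons x vs)
  then have "expanding_inv E s ts r B (insert x W) (process_vertex B r st x)"
    by (simp add: expanding_inv_process_vertex)
  with Cons show ?case by fastforce
qed simp

section \<open>The main loop\<close>

definition loop_inv :: "'v tedge set \<Rightarrow> 'v \<Rightarrow> real \<Rightarrow> 'v bstate \<Rightarrow> bool" where
  "loop_inv E s ts st \<longleftrightarrow> state_inv E s ts st \<and> sorted (map (\<lambda>i. rlev (recs st ! i)) (queue st)) \<and>
     (queue st \<noteq> [] \<longrightarrow>
        (\<forall>b < length (recs st). rlev (recs st ! b) \<le> Suc (rlev (recs st ! hd (queue st))))) \<and>
     (\<forall>a < length (recs st). a \<notin> set (queue st) \<longrightarrow>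
        (\<forall>q \<in> set (queue st). rlev (recs st ! a) \<le> rlev (recs st ! q)) \<and> expanded E st a)"

lemma loop_inv_init: "loop_inv E s ts (bfs_init s ts)"
  by (auto simp: loop_inv_def state_inv_def tree_consistent_def sig_min_time_def
      traversed_from_dequeued_def bfs_init_def)

lemma state_inv_dequeue:
  assumes inv: "state_inv E s ts st" and queue: "queue st = r # rest"
  shows "state_inv E s ts (st\<lparr>queue := rest\<rparr>)"
proof -
  let ?st' = "st\<lparr>queue := rest\<rparr>"
  have sub: "\<And>j. j \<notin> set (queue st) \<Longrightarrow> j \<notin> set rest" using queue by simp
  have "tree_consistent E ?st'"
    using inv sub unfolding state_inv_def tree_consistent_def by (simp; metis)
  moreover have "traversed_from_dequeued ?st'"
    using inv sub unfolding state_inv_def traversed_from_dequeued_def by (simp; metis)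
  ultimately show ?thesis using inv queue by (simp add: state_inv_def sig_min_time_def)
qed

lemma expanding_inv_dequeue:
  assumes fin: "finite E" and inv: "loop_inv E s ts st" and queue: "queue st = r # rest"
    and B: "B = {e \<in> E. e \<notin> trav st \<and> fst e = rv (recs st ! r) \<and> rtime (recs st ! r) \<le> snd (snd e)}"
  shows "expanding_inv E s ts r B {} (st\<lparr>queue := rest\<rparr>)"
proof -
  let ?st' = "st\<lparr>queue := rest\<rparr>" and ?d = "rlev (recs st ! r)"
  have st: "state_inv E s ts st" and srt: "sorted (map (\<lambda>i. rlev (recs st ! i)) (queue st))"
    and bound: "\<forall>b < length (recs st). rlev (recs st ! b) \<le> Suc ?d"
    and dequeued: "\<forall>a < length (recs st). a \<notin> set (queue st) \<longrightarrow> rlev (recs st ! a) \<le> ?d \<and> expanded E st a"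
    using inv queue by (auto simp: loop_inv_def)
  have r: "r < length (recs st)" "r \<notin> set rest"
    using st queue by (auto simp: state_inv_def)
  have "levels_layered ?st' ?d"
    using bound srt dequeued queue by (auto simp: levels_layered_def)
  moreover have "expanded E ?st' a" if "a < length (recs st)" "a \<notin> set rest" "a \<noteq> r" for a
    using that dequeued queue by (simp add: expanded_def reached_def)
  moreover have "reached ?st' x (Suc ?d) t"
    if "(rv (recs st ! r), x, t) \<in> E" "rtime (recs st ! r) \<le> t" "(rv (recs st ! r), x, t) \<notin> B" for x t
  proof -
    have "(rv (recs st ! r), x, t) \<in> trav st" using that B by auto
    then obtain b where b: "b < length (recs st)" "b \<notin> set (queue st)" "rv (recs st ! b) = rv (recs st ! r)"
        "rtime (recs st ! b) \<le> t"
      using st unfolding state_inv_def traversed_from_dequeued_def by fastforce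
    then have "reached st x (Suc (rlev (recs st ! b))) t" "rlev (recs st ! b) \<le> ?d"
      using dequeued that(1) unfolding expanded_def by auto
    then show ?thesis using reached_mono by (fastforce simp: reached_def)
  qed
  ultimately show ?thesis
    using state_inv_dequeue[OF st queue] r fin B unfolding expanding_inv_def by auto
qed

lemma loop_inv_finish:
  assumes inv: "expanding_inv E s ts r B W st" and W: "\<forall>e \<in> B. fst (snd e) \<in> W"
  shows "loop_inv E s ts st"
proof -
  let ?d = "rlev (recs st ! r)"
  have st: "state_inv E s ts st" and lay: "levels_layered st ?d"
    and others: "\<forall>a < length (recs st). a \<notin> set (queue st) \<and> a \<noteq> r \<longrightarrow> expanded E st a"
    using inv by (simp_all add: expanding_inv_def)
  have "expanded E st r"
    unfolding expanded_def using inv W by (fastforce simp: expanding_inv_def)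
  then have "expanded E st a" if "a < length (recs st)" "a \<notin> set (queue st)" for a
    using others that by blast
  moreover have "rlev (recs st ! b) \<le> Suc (rlev (recs st ! hd (queue st)))"
    if "queue st \<noteq> []" "b < length (recs st)" for b
    using lay hd_in_set[OF that(1)] that(2) unfolding levels_layered_def by fastforce
  moreover have "rlev (recs st ! a) \<le> rlev (recs st ! q)"
    if "a < length (recs st)" "a \<notin> set (queue st)" "q \<in> set (queue st)" for a q
    using lay that unfolding levels_layered_def by (meson order_trans)
  ultimately show ?thesis using st lay by (simp add: loop_inv_def levels_layered_def)
qed

lemma loop_inv_step:
  assumes fin: "finite E" and inv: "loop_inv E s ts st" and step: "bfs_step E st st'"
  shows "loop_inv E s ts st'"
  using step
proof cases
  case (1 r rest B vs)
  have "expanding_inv E s ts r B {} (st\<lparr>queue := rest\<rparr>)"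
    using expanding_inv_dequeue[OF fin inv 1(2,3)] .
  moreover have "\<forall>x \<in> set vs. \<exists>e \<in> B. fst (snd e) = x" using 1(5) by force
  ultimately have "expanding_inv E s ts r B (set vs) st'"
    using expanding_inv_fold unfolding 1(1) by fastforce
  moreover have "\<forall>e \<in> B. fst (snd e) \<in> set vs" using 1(3,5) by auto
  ultimately show ?thesis by (rule loop_inv_finish)
qed

lemma loop_inv_reachable:
  assumes "finite E" "(bfs_step E)\<^sup>*\<^sup>* (bfs_init s ts) st"
  shows "loop_inv E s ts st"
  using assms(2) by induction (auto intro: loop_inv_init loop_inv_step[OF assms(1)])

section \<open>Tree paths are shortest temporal paths\<close>

lemma rlev_eq_0_iff:
  assumes "state_inv E s ts st" "i < length (recs st)"
  shows "rlev (recs st ! i) = 0 \<longleftrightarrow> i = 0"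
  using assms unfolding state_inv_def tree_consistent_def by (cases "i = 0") auto

lemma tree_path_temporal_path:
  assumes st: "state_inv E s ts st" and i: "i < length (recs st)"
  shows "\<exists>P. tree_path st i P \<and> length P = rlev (recs st ! i) \<and>
    (i \<noteq> 0 \<longrightarrow> temporal_path E ts s (rv (recs st ! i)) P \<and> snd (snd (last P)) = rtime (recs st ! i))"
  using i
proof (induction "rlev (recs st ! i)" arbitrary: i)
  case 0
  then show ?case using rlev_eq_0_iff[OF st] tree_path.root by fastforce
next
  case (Suc k)
  have "i \<noteq> 0" using rlev_eq_0_iff[OF st Suc.prems] Suc.hyps(2) by auto
  then obtain j where j: "j < length (recs st)" "rpred (recs st ! i) = Some j"
      "redge (recs st ! i) = Some (rv (recs st ! j), rv (recs st ! i), rtime (recs st ! i))"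
      "(rv (recs st ! j), rv (recs st ! i), rtime (recs st ! i)) \<in> E"
      "rtime (recs st ! j) \<le> rtime (recs st ! i)" "rlev (recs st ! i) = Suc (rlev (recs st ! j))"
    using st Suc.prems unfolding state_inv_def tree_consistent_def by blast
  let ?e = "(rv (recs st ! j), rv (recs st ! i), rtime (recs st ! i))"
  obtain P where P: "tree_path st j P" "length P = k"
      "j \<noteq> 0 \<longrightarrow> temporal_path E ts s (rv (recs st ! j)) P \<and> snd (snd (last P)) = rtime (recs st ! j)"
    using Suc.hyps(1)[of j] Suc.hyps(2) j by auto
  have "temporal_path E ts s (rv (recs st ! i)) (P @ [?e])"
  proof (cases "j = 0")
    case True
    then have "P = []" "rv (recs st ! j) = s" "rtime (recs st ! j) = ts"
      using P(2) Suc.hyps(2) j(6) st by (auto simp: state_inv_def)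
    then show ?thesis using temporal_path_single[OF j(4)] j(5) by simp
  next
    case False
    then have "P \<noteq> []" using P(2) Suc.hyps(2) j(1,6) rlev_eq_0_iff[OF st] by auto
    then show ?thesis using P(3) False j(4,5) by (simp add: temporal_path_snoc)
  qed
  then show ?case
    using tree_path.step[OF Suc.prems j(2,3) P(1)] P(2) Suc.hyps(2) by auto
qed

lemma reached_along_temporal_path:
  assumes st: "state_inv E s ts st" and expanded: "\<forall>a < length (recs st). expanded E st a"
    and P: "temporal_path E ts s x P"
  shows "reached st x (length P) (snd (snd (last P)))"
  using P
proof (induction P arbitrary: x rule: rev_induct)
  case Nil
  then show ?case by (simp add: temporal_path_def)
next
  case (snoc e P)
  obtain y z t where e: "e = (y, z, t)" by (cases e)
  show ?case
  proof (cases "P = []")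
    case True
    then have "expanded E st 0" "(s, x, t) \<in> E" "ts \<le> t"
      using snoc.prems st expanded e by (auto simp: temporal_path_def state_inv_def)
    then show ?thesis using True st e unfolding expanded_def state_inv_def by auto
  next
    case False
    then have P: "temporal_path E ts s y P" "(y, x, t) \<in> E" "snd (snd (last P)) \<le> t"
      using snoc.prems unfolding e temporal_path_snoc[OF False] by auto
    then obtain b where b: "b < length (recs st)" "rv (recs st ! b) = y" "rlev (recs st ! b) \<le> length P"
        "rtime (recs st ! b) \<le> t"
      using snoc.IH unfolding reached_def by fastforce
    then have "reached st x (Suc (rlev (recs st ! b))) t" using expanded P(2) unfolding expanded_def by auto
    then show ?thesis using b(3) e reached_mono by fastforce
  qed
qed

lemma bfs_final_all_expanded:
  assumes "finite E" "bfs_final E s ts st"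
  shows "state_inv E s ts st" "\<forall>a < length (recs st). expanded E st a"
  using loop_inv_reachable[OF assms(1)] assms(2) by (auto simp: bfs_final_def loop_inv_def)

lemma min_level_tree_path_shortest:
  assumes st: "state_inv E s ts st" and expanded: "\<forall>a < length (recs st). expanded E st a"
    and min: "min_level_occ st v i" and "v \<noteq> s"
  shows "\<exists>P. tree_path st i P \<and> shortest_temporal_path E ts s v P"
proof -
  have i: "i < length (recs st)" "rv (recs st ! i) = v"
    "\<forall>j < length (recs st). rv (recs st ! j) = v \<longrightarrow> rlev (recs st ! i) \<le> rlev (recs st ! j)"
    using min by (simp_all add: min_level_occ_def)
  have "rv (recs st ! 0) = s" using st by (simp add: state_inv_def)
  then have "i \<noteq> 0" using i(2) \<open>v \<noteq> s\<close> by (cases "i = 0") simp_all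
  then obtain P where P: "tree_path st i P" "length P = rlev (recs st ! i)" "temporal_path E ts s v P"
    using tree_path_temporal_path[OF st i(1)] i(2) by auto
  moreover have "length P \<le> length Q" if Q: "temporal_path E ts s v Q" for Q
  proof -
    obtain b where b: "b < length (recs st)" "rv (recs st ! b) = v" "rlev (recs st ! b) \<le> length Q"
      using reached_along_temporal_path[OF st expanded Q] unfolding reached_def by blast
    then have "rlev (recs st ! i) \<le> rlev (recs st ! b)" using i(3) by blast
    then show ?thesis using P(2) b(3) by simp
  qed
  ultimately show ?thesis unfolding shortest_temporal_path_def by blast
qed

lemma no_temporal_path_if_not_occurs:
  assumes st: "state_inv E s ts st" and expanded: "\<forall>a < length (recs st). expanded E st a"
    and "\<not> occurs st v"
  shows "\<not> (\<exists>P. temporal_path E ts s v P)"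
  using reached_along_temporal_path[OF st expanded] assms(3) unfolding occurs_def reached_def by blast

theorem mainTheorem18:
  fixes V :: "'v set" and E :: "'v tedge set" and s v :: 'v and ts :: real and st :: "'v bstate"
  assumes "finite V" and "finite E"
    and "\<forall>(x, y, t) \<in> E. x \<in> V \<and> y \<in> V \<and> x \<noteq> y"
    and "s \<in> V" and "v \<in> V" and "v \<noteq> s"
    and "bfs_final E s ts st"
  shows "(occurs st v \<longrightarrow> (\<forall>i. min_level_occ st v i \<longrightarrow>
            (\<exists>P. tree_path st i P \<and> shortest_temporal_path E ts s v P)))
       \<and> (\<not> occurs st v \<longrightarrow> \<not> (\<exists>P. temporal_path E ts s v P))"
  using min_level_tree_path_shortest[OF bfs_final_all_expanded[OF assms(2,7)] _ assms(6)]
    no_temporal_path_if_not_occurs[OF bfs_final_all_expanded[OF assms(2,7)]]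
  by blast

end
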